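(* Let $F$ and $H$ be two CNF formulae that do not share variables and are both unsatisfiable. Then the tree obtained from an optimal backtracking search tree of $F$ by replacing every empty subtree with an optimal backtracking search tree of $H$ is an optimal backtracking search tree of the product $F \cdot H = \{\gamma \vee \delta \mid \gamma \in F,\ \delta \in H\}$.
   Context: A CNF formula is a finite set of clauses (disjunctions of literals); the empty clause is unsatisfiable. For a partial truth assignment $I$ (a set of literals), $F|I$ is obtained from $F$ by deleting every clause containing a literal true under $I$ and deleting from the remaining clauses every literal false under $I$. $Var(F)$ is the set of variables of $F$. A binary tree is either the empty tree $()$ or a triple $(x~T_1~T_2)$ with root labelled $x$, left subtree $T_1$, right subtree $T_2$; its size is its number of nodes; the "empty subtrees" of a tree are all occurrences of $()$ inside it. A backtracking search tree (BST) of $F$ is: the empty tree if $F$ contains the empty clause; otherwise $(x~T_1~T_2)$ with $x \in Var(F)$, $T_1$ a BST of $F|\{\neg x\}$, $T_2$ a BST of $F|\{x\}$. An optimal BST is one of minimum size. *)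

theory Defs
  imports Main
begin

datatype 'v lit = Pos 'v | Neg 'v

fun var :: "'v lit \<Rightarrow> 'v" where
  "var (Pos x) = x" | "var (Neg x) = x"

fun compl :: "'v lit \<Rightarrow> 'v lit" where
  "compl (Pos x) = Neg x" | "compl (Neg x) = Pos x"

type_synonym 'v clause = "'v lit set"
type_synonym 'v cnf = "'v clause set"

definition is_cnf :: "'v cnf \<Rightarrow> bool" where
  "is_cnf F \<longleftrightarrow> finite F \<and> (\<forall>C\<in>F. finite C)"

definition Var :: "'v cnf \<Rightarrow> 'v set" where
  "Var F = {var l | l C. C \<in> F \<and> l \<in> C}"

fun lit_val :: "('v \<Rightarrow> bool) \<Rightarrow> 'v lit \<Rightarrow> bool" where
  "lit_val a (Pos x) = a x" | "lit_val a (Neg x) = (\<not> a x)"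

definition satisfiable :: "'v cnf \<Rightarrow> bool" where
  "satisfiable F \<longleftrightarrow> (\<exists>a. \<forall>C\<in>F. \<exists>l\<in>C. lit_val a l)"

definition restrict :: "'v cnf \<Rightarrow> 'v lit set \<Rightarrow> 'v cnf" where
  "restrict F I = {C - {l. compl l \<in> I} | C. C \<in> F \<and> C \<inter> I = {}}"

definition product :: "'v cnf \<Rightarrow> 'v cnf \<Rightarrow> 'v cnf" where
  "product F H = {C \<union> D | C D. C \<in> F \<and> D \<in> H}"

datatype 'v tree = Leaf | Node 'v "'v tree" "'v tree"

fun tsize :: "'v tree \<Rightarrow> nat" where
  "tsize Leaf = 0"
| "tsize (Node x l r) = tsize l + tsize r + 1"

inductive bst :: "'v cnf \<Rightarrow> 'v tree \<Rightarrow> bool" where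
  bst_leaf: "{} \<in> F \<Longrightarrow> bst F Leaf"
| bst_node: "{} \<notin> F \<Longrightarrow> x \<in> Var F \<Longrightarrow> bst (restrict F {Neg x}) T1
     \<Longrightarrow> bst (restrict F {Pos x}) T2 \<Longrightarrow> bst F (Node x T1 T2)"

definition optimal_bst :: "'v cnf \<Rightarrow> 'v tree \<Rightarrow> bool" where
  "optimal_bst F T \<longleftrightarrow> bst F T \<and> (\<forall>T'. bst F T' \<longrightarrow> tsize T \<le> tsize T')"

fun graft :: "'v tree \<Rightarrow> 'v tree \<Rightarrow> 'v tree" where
  "graft Leaf S = S"
| "graft (Node x l r) S = Node x (graft l S) (graft r S)"

end

theory Submission
  imports Defs
begin

(* Count empty subtrees: leaves T = tsize T + 1 and leaves (graft T S) = leaves T * leaves S.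
   Branching on a variable of F leaves H untouched, so the restrictions of F * H are
   F|x * H, and at a leaf of T, where F contains the empty clause, every search tree of H is
   one of F * H; hence grafting yields search trees of F * H.
   Conversely, each branching variable of a search tree T of F * H belongs to exactly one
   factor, and by induction T splits into search trees A of F and B of H with
   leaves A * leaves B <= leaves T: at a node branching on a variable of F, join the two
   trees for F and keep the smaller of the two trees for H. *)

lemma var_compl [simp]: "var (compl l) = var l"
  by (cases l) simp_all

lemma VarI: "C \<in> F \<Longrightarrow> l \<in> C \<Longrightarrow> var l \<in> Var F"
  unfolding Var_def by blast

lemma VarE: "v \<in> Var F \<Longrightarrow> (\<And>C l. C \<in> F \<Longrightarrow> l \<in> C \<Longrightarrow> v = var l \<Longrightarrow> P) \<Longrightarrow> P"
  unfolding Var_def by blast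

lemma productI: "C \<in> F \<Longrightarrow> D \<in> H \<Longrightarrow> C \<union> D \<in> product F H"
  unfolding product_def by blast

lemma productE: "E \<in> product F H \<Longrightarrow> (\<And>C D. C \<in> F \<Longrightarrow> D \<in> H \<Longrightarrow> E = C \<union> D \<Longrightarrow> P) \<Longrightarrow> P"
  unfolding product_def by blast

lemma product_commute: "product F H = product H F"
  unfolding product_def by blast

lemma empty_in_product_iff: "{} \<in> product F H \<longleftrightarrow> {} \<in> F \<and> {} \<in> H"
  by (auto elim: productE intro: productI[of "{}" F "{}" H, simplified])

lemma Var_product_subset: "Var (product F H) \<subseteq> Var F \<union> Var H"
  by (auto elim!: VarE productE intro: VarI)

lemma Var_subset_Var_product:
  assumes "H \<noteq> {}" shows "Var F \<subseteq> Var (product F H)"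
proof
  fix v assume "v \<in> Var F"
  then obtain C l where "C \<in> F" "l \<in> C" "v = var l" by (rule VarE)
  moreover obtain D where "D \<in> H" using assms by blast
  ultimately show "v \<in> Var (product F H)" by (blast intro: VarI productI)
qed

lemma Var_restrict_subset: "Var (restrict F I) \<subseteq> Var F"
  unfolding restrict_def by (auto elim!: VarE intro: VarI)

lemma empty_in_restrict: "{} \<in> F \<Longrightarrow> {} \<in> restrict F I"
  unfolding restrict_def by blast

lemma restrict_product: "restrict (product F H) I = product (restrict F I) (restrict H I)"
proof (intro set_eqI iffI)
  fix E assume "E \<in> restrict (product F H) I"
  then obtain C D where "C \<in> F" "D \<in> H" "(C \<union> D) \<inter> I = {}"
    and "E = (C - {l. compl l \<in> I}) \<union> (D - {l. compl l \<in> I})"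
    unfolding restrict_def product_def by blast
  then show "E \<in> product (restrict F I) (restrict H I)"
    unfolding restrict_def by (blast intro: productI)
next
  fix E assume "E \<in> product (restrict F I) (restrict H I)"
  then obtain C D where "C \<in> F" "D \<in> H" "C \<inter> I = {}" "D \<inter> I = {}"
    and "E = (C \<union> D) - {l. compl l \<in> I}"
    unfolding restrict_def product_def by blast
  then show "E \<in> restrict (product F H) I"
    unfolding restrict_def by (blast intro: productI)
qed

lemma restrict_unused_var:
  assumes "var l \<notin> Var F" shows "restrict F {l} = F"
proof -
  have "C \<inter> {l} = {} \<and> C - {l'. compl l' \<in> {l}} = C" if "C \<in> F" for C
  proof -
    have "var l' \<noteq> var l" if "l' \<in> C" for l'
      using VarI[OF \<open>C \<in> F\<close> that] assms by auto
    then have "l \<notin> C" "\<forall>l'\<in>C. compl l' \<noteq> l" by (metis var_compl)+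
    then show ?thesis by auto
  qed
  then show ?thesis unfolding restrict_def by force
qed

lemma restrict_product_unused_var:
  "var l \<notin> Var H \<Longrightarrow> restrict (product F H) {l} = product (restrict F {l}) H"
  by (simp add: restrict_product restrict_unused_var)

lemma bst_formula_nonempty: "bst F T \<Longrightarrow> F \<noteq> {}"
  by (cases rule: bst.cases) (auto elim: VarE)

lemma bst_product_if_empty_clause: "bst H T \<Longrightarrow> {} \<in> F \<Longrightarrow> bst (product F H) T"
proof (induction H T arbitrary: F rule: bst.induct)
  case (bst_leaf H)
  then show ?case by (auto intro: bst.bst_leaf simp: empty_in_product_iff)
next
  case (bst_node H x T1 T2)
  have "x \<in> Var (product F H)"
    using bst_node.hyps(2) Var_subset_Var_product[of F H] bst_node.prems
    by (auto simp: product_commute[of F H])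
  then show ?case
    using bst_node by (auto intro!: bst.bst_node simp: empty_in_product_iff restrict_product empty_in_restrict)
qed

lemma bst_graft_product:
  "bst F T \<Longrightarrow> bst H S \<Longrightarrow> Var F \<inter> Var H = {} \<Longrightarrow> bst (product F H) (graft T S)"
proof (induction F T rule: bst.induct)
  case (bst_leaf F)
  then show ?case by (simp add: bst_product_if_empty_clause)
next
  case (bst_node F x T1 T2)
  have "x \<in> Var (product F H)"
    using bst_node.hyps(2) Var_subset_Var_product[OF bst_formula_nonempty[OF bst_node.prems(1)]] by blast
  moreover have "x \<notin> Var H" using bst_node.hyps(2) bst_node.prems(2) by blast
  moreover have "Var (restrict F I) \<inter> Var H = {}" for I
    using Var_restrict_subset[of F I] bst_node.prems(2) by blast
  ultimately show ?case
    using bst_node by (auto intro!: bst.bst_node simp: empty_in_product_iff restrict_product_unused_var)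
qed

fun leaves :: "'v tree \<Rightarrow> nat" where
  "leaves Leaf = 1"
| "leaves (Node x l r) = leaves l + leaves r"

lemma leaves_eq_Suc_tsize: "leaves T = Suc (tsize T)"
  by (induction T) simp_all

lemma leaves_graft: "leaves (graft T S) = leaves T * leaves S"
  by (induction T) (simp_all add: algebra_simps)

lemma optimal_bst_iff_leaves:
  "optimal_bst F T \<longleftrightarrow> bst F T \<and> (\<forall>T'. bst F T' \<longrightarrow> leaves T \<le> leaves T')"
  by (simp add: optimal_bst_def leaves_eq_Suc_tsize)

lemma bst_pair_of_restrictions:
  assumes "x \<in> Var F"
    and "bst (restrict F {Neg x}) A1" "bst H B1" "leaves A1 * leaves B1 \<le> t1"
    and "bst (restrict F {Pos x}) A2" "bst H B2" "leaves A2 * leaves B2 \<le> t2"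
  shows "\<exists>A B. bst F A \<and> bst H B \<and> leaves A * leaves B \<le> t1 + t2"
proof (cases "{} \<in> F")
  case True
  have "leaves B1 \<le> leaves A1 * leaves B1" by (simp add: leaves_eq_Suc_tsize)
  then have "leaves B1 \<le> t1 + t2" using assms(4) by linarith
  then show ?thesis
    using True assms(3) by (intro exI[of _ Leaf] exI[of _ B1]) (simp add: bst.bst_leaf)
next
  case False
  then have "bst F (Node x A1 A2)" using assms by (blast intro: bst.bst_node)
  moreover obtain B where "bst H B" and B: "leaves B = min (leaves B1) (leaves B2)"
    using assms(3,6) by (cases "leaves B1 \<le> leaves B2") (auto simp: min_def)
  moreover have "leaves (Node x A1 A2) * leaves B \<le> t1 + t2"
  proof -
    have "leaves A1 * leaves B \<le> leaves A1 * leaves B1" "leaves A2 * leaves B \<le> leaves A2 * leaves B2"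
      using B by simp_all
    then show ?thesis unfolding leaves.simps distrib_right using assms(4,7) by linarith
  qed
  ultimately show ?thesis by blast
qed

lemma bst_product_split:
  "bst (product F H) T \<Longrightarrow> Var F \<inter> Var H = {}
    \<Longrightarrow> \<exists>A B. bst F A \<and> bst H B \<and> leaves A * leaves B \<le> leaves T"
proof (induction "product F H" T arbitrary: F H rule: bst.induct)
  case bst_leaf
  then have "bst F Leaf" "bst H Leaf" by (auto simp: empty_in_product_iff intro: bst.bst_leaf)
  then show ?case by force
next
  case (bst_node x T1 T2)
  have branch_on_left_var: "\<exists>A B. bst F' A \<and> bst H' B \<and> leaves A * leaves B \<le> leaves (Node x T1 T2)"
    if FH': "product F' H' = product F H" "Var F' \<inter> Var H' = {}" and "x \<in> Var F'" for F' H'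
  proof -
    have "x \<notin> Var H'" using that by blast
    then have restr: "restrict (product F H) {Neg x} = product (restrict F' {Neg x}) H'"
        "restrict (product F H) {Pos x} = product (restrict F' {Pos x}) H'"
      unfolding FH'(1)[symmetric] by (simp_all add: restrict_product_unused_var)
    have disj: "Var (restrict F' I) \<inter> Var H' = {}" for I
      using Var_restrict_subset[of F' I] FH'(2) by blast
    obtain A1 B1 A2 B2
      where "bst (restrict F' {Neg x}) A1" "bst H' B1" "leaves A1 * leaves B1 \<le> leaves T1"
        and "bst (restrict F' {Pos x}) A2" "bst H' B2" "leaves A2 * leaves B2 \<le> leaves T2"
      using bst_node.hyps(4)[OF restr(1) disj] bst_node.hyps(6)[OF restr(2) disj] by blast
    then have "\<exists>A B. bst F' A \<and> bst H' B \<and> leaves A * leaves B \<le> leaves T1 + leaves T2"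
      by (rule bst_pair_of_restrictions[OF \<open>x \<in> Var F'\<close>])
    then show ?thesis by simp
  qed
  have "x \<in> Var F \<union> Var H" using bst_node.hyps(2) Var_product_subset[of F H] by blast
  then show ?case
  proof
    assume "x \<in> Var F"
    then show ?case using branch_on_left_var[OF refl bst_node.prems] by simp
  next
    assume "x \<in> Var H"
    have "Var H \<inter> Var F = {}" using bst_node.prems by blast
    then obtain B A where "bst H B" "bst F A" "leaves B * leaves A \<le> leaves (Node x T1 T2)"
      using branch_on_left_var[OF product_commute[of H F] _ \<open>x \<in> Var H\<close>] by blast
    then show ?case by (intro exI[of _ A] exI[of _ B]) (simp add: mult.commute)
  qed
qed

theorem lemma5:
  fixes F H :: "'v cnf" and TF TH :: "'v tree"
  assumes "is_cnf F" and "is_cnf H"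
    and "Var F \<inter> Var H = {}"
    and "\<not> satisfiable F" and "\<not> satisfiable H"
    and "optimal_bst F TF" and "optimal_bst H TH"
  shows "optimal_bst (product F H) (graft TF TH)"
proof -
  from assms(6,7) have "bst F TF" "bst H TH"
    and min_F: "\<And>A. bst F A \<Longrightarrow> leaves TF \<le> leaves A"
    and min_H: "\<And>B. bst H B \<Longrightarrow> leaves TH \<le> leaves B"
    unfolding optimal_bst_iff_leaves by blast+
  have "leaves (graft TF TH) \<le> leaves T" if T: "bst (product F H) T" for T
  proof -
    obtain A B where "bst F A" "bst H B" "leaves A * leaves B \<le> leaves T"
      using bst_product_split[OF T assms(3)] by blast
    then show ?thesis
      using min_F min_H by (simp add: leaves_graft) (meson mult_le_mono le_trans)
  qed
  then show ?thesis
    using bst_graft_product[OF \<open>bst F TF\<close> \<open>bst H TH\<close> assms(3)]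
    by (simp add: optimal_bst_iff_leaves)
qed

end
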